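(* Given a Spherical Diagram $\mathcal D$, every great circle on the unit sphere is crossed by at least three distinct arcs of $\mathcal D$.
   Context: A geodesic arc on the unit sphere in $\mathbb R^3$ is the unique shortest curve joining two non-antipodal points. An arc $a$ blocks an arc $b$ (equivalently, $b$ hits $a$) if an endpoint of $b$ lies in the relative interior of $a$. A Spherical Diagram (SD) is a finite non-empty collection $\mathcal D$ of pairwise interior-disjoint geodesic arcs on the unit sphere such that each arc of $\mathcal D$ is blocked by arcs of $\mathcal D$ at each of its endpoints. An arc $a$ crosses a curve $\gamma$ if $a\cap\gamma$ contains an isolated point $x$ in the relative interior of $a$ such that every neighborhood of $x$ contains points of $\gamma$ on both sides of $a$. *)

theory Defs
  imports "HOL-Analysis.Analysis"
begin

type_synonym pt = "real^3"

definition arc_ends :: "pt \<Rightarrow> pt \<Rightarrow> bool" where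
  "arc_ends p q \<longleftrightarrow> norm p = 1 \<and> norm q = 1 \<and> p \<noteq> q \<and> p \<noteq> - q"

text \<open>The geodesic (minor great-circle) arc from p to q: radial projection of the chord.\<close>
definition geo_arc :: "pt \<Rightarrow> pt \<Rightarrow> pt set" where
  "geo_arc p q = (\<lambda>v. v /\<^sub>R norm v) ` closed_segment p q"

definition geo_arc_int :: "pt \<Rightarrow> pt \<Rightarrow> pt set" where
  "geo_arc_int p q = (\<lambda>v. v /\<^sub>R norm v) ` open_segment p q"

definition is_arc :: "pt set \<Rightarrow> bool" where
  "is_arc A \<longleftrightarrow> (\<exists>p q. arc_ends p q \<and> A = geo_arc p q)"

definition relint_arc :: "pt set \<Rightarrow> pt set" where
  "relint_arc A = {x. \<exists>p q. arc_ends p q \<and> A = geo_arc p q \<and> x \<in> geo_arc_int p q}"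

definition endpoint_of :: "pt \<Rightarrow> pt set \<Rightarrow> bool" where
  "endpoint_of x A \<longleftrightarrow> (\<exists>p q. arc_ends p q \<and> A = geo_arc p q \<and> (x = p \<or> x = q))"

definition blocks :: "pt set \<Rightarrow> pt set \<Rightarrow> bool" where
  "blocks a b \<longleftrightarrow> (\<exists>x. endpoint_of x b \<and> x \<in> relint_arc a)"

definition spherical_diagram :: "pt set set \<Rightarrow> bool" where
  "spherical_diagram D \<longleftrightarrow>
     finite D \<and> D \<noteq> {} \<and> (\<forall>a\<in>D. is_arc a) \<and>
     (\<forall>a\<in>D. \<forall>b\<in>D. a \<noteq> b \<longrightarrow> relint_arc a \<inter> relint_arc b = {}) \<and>
     (\<forall>b\<in>D. \<forall>x. endpoint_of x b \<longrightarrow> (\<exists>a\<in>D. x \<in> relint_arc a))"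

definition great_circle :: "pt \<Rightarrow> pt set" where
  "great_circle n = {x. norm x = 1 \<and> x \<bullet> n = 0}"

definition crosses :: "pt set \<Rightarrow> pt set \<Rightarrow> bool" where
  "crosses a \<gamma> \<longleftrightarrow> (\<exists>p q x. arc_ends p q \<and> a = geo_arc p q \<and> x \<in> geo_arc_int p q \<and> x \<in> \<gamma> \<and>
      (\<exists>e>0. a \<inter> \<gamma> \<inter> ball x e = {x}) \<and>
      (\<forall>e>0. (\<exists>y\<in>\<gamma>. dist y x < e \<and> y \<bullet> cross3 p q > 0) \<and>
             (\<exists>y\<in>\<gamma>. dist y x < e \<and> y \<bullet> cross3 p q < 0)))"

end

theory Submission
  imports Defs
begin

text \<open>
  Call an arc of \<open>D\<close> transversal to \<open>C = great_circle n\<close> if its endpoints lie strictly on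
  opposite sides of the plane of \<open>C\<close>. A transversal arc crosses \<open>C\<close>, at exactly one point, so
  it suffices to show that for every direction \<open>u\<close> in the plane of \<open>C\<close> some transversal arc
  meets \<open>C\<close> at a point \<open>x\<close> with \<open>x \<bullet> u > 0\<close>: at most two points of \<open>C\<close> cannot do this for
  every \<open>u\<close>, since two points of a circle always lie in a closed half-circle.

  Some endpoint of \<open>D\<close> lies off \<open>C\<close>, say in the hemisphere \<open>x \<bullet> n > 0\<close>, because an arc
  lying in \<open>C\<close> is blocked by another arc lying in \<open>C\<close>, and the two would overlap. Among the
  endpoints in that hemisphere choose \<open>v\<close> maximising \<open>M = (v \<bullet> u) / (v \<bullet> n)\<close> and consider the
  tilted great circle \<open>x \<bullet> u = M (x \<bullet> n)\<close> through \<open>v\<close>. For the arc blocking \<open>v\<close>, either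
  some transversal arc meets \<open>C\<close> on the side \<open>x \<bullet> u > 0\<close>, or it lies in the tilted circle. In
  the latter case one of its endpoints is in the open hemisphere, and the arc blocking that
  endpoint lies in the tilted circle as well, so two arcs of \<open>D\<close> overlap.
\<close>

lemma pos_comb_eq_0_cases:
  fixes a b s t :: real
  assumes "a > 0" "b > 0" "a * s + b * t = 0"
  shows "s > 0 \<and> t < 0 \<or> s < 0 \<and> t > 0 \<or> s = 0 \<and> t = 0"
proof -
  have "a * s > 0 \<longleftrightarrow> s > 0" "a * s < 0 \<longleftrightarrow> s < 0" "b * t > 0 \<longleftrightarrow> t > 0" "b * t < 0 \<longleftrightarrow> t < 0"
    using assms(1,2) by (simp_all add: zero_less_mult_iff mult_less_0_iff)
  then show ?thesis using assms(3) by linarith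
qed

lemma pos_comb_pos:
  fixes a b s t :: real
  assumes "a > 0" "b > 0" "a * s + b * t > 0"
  shows "s > 0 \<or> t > 0"
proof -
  have "a * s > 0 \<longleftrightarrow> s > 0" "b * t > 0 \<longleftrightarrow> t > 0"
    using assms(1,2) by (simp_all add: zero_less_mult_iff)
  then show ?thesis using assms(3) by linarith
qed

section \<open>Geodesic arcs\<close>

lemma arc_ends_commute: "arc_ends p q \<longleftrightarrow> arc_ends q p"
  by (auto simp: arc_ends_def)

lemma geo_arc_commute: "geo_arc p q = geo_arc q p"
  by (simp add: geo_arc_def closed_segment_commute)

lemma geo_arc_int_commute: "geo_arc_int p q = geo_arc_int q p"
  by (simp add: geo_arc_int_def open_segment_commute)

lemma arc_ends_comb_eq_0_iff:
  assumes "arc_ends p q"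
  shows "a *\<^sub>R p + b *\<^sub>R q = 0 \<longleftrightarrow> a = 0 \<and> b = 0"
proof
  assume comb: "a *\<^sub>R p + b *\<^sub>R q = 0"
  have p: "norm p = 1" "p \<noteq> q" "p \<noteq> - q" and q: "norm q = 1"
    using assms by (auto simp: arc_ends_def)
  show "a = 0 \<and> b = 0"
  proof (cases "a = 0")
    case True
    then show ?thesis using comb q by auto
  next
    case False
    then have pe: "p = (- b / a) *\<^sub>R q"
    proof -
      have "a *\<^sub>R p = - (b *\<^sub>R q)" using comb by (simp add: eq_neg_iff_add_eq_0)
      then have "(1 / a) *\<^sub>R (a *\<^sub>R p) = (- b / a) *\<^sub>R q" by simp
      then show ?thesis using False by simp
    qed
    then have "norm p = \<bar>- b / a\<bar>" using q by simp
    then have "- b / a = 1 \<or> - b / a = -1" using p by linarith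
    then have "p = q \<or> p = - q" using pe by auto
    then show ?thesis using p by blast
  qed
qed simp

lemma arc_ends_comb_eq_iff:
  assumes "arc_ends p q"
  shows "a *\<^sub>R p + b *\<^sub>R q = c *\<^sub>R p + d *\<^sub>R q \<longleftrightarrow> a = c \<and> b = d"
  using arc_ends_comb_eq_0_iff [OF assms, of "a - c" "b - d"] by (simp add: algebra_simps)

lemma arc_ends_cross3_nonzero:
  assumes "arc_ends p q"
  shows "cross3 p q \<noteq> 0"
proof
  assume "cross3 p q = 0"
  then have "collinear {0, p, q}" by (simp add: cross_eq_0)
  moreover have "p \<noteq> 0" "q \<noteq> 0" using assms by (auto simp: arc_ends_def)
  ultimately obtain c where "q = c *\<^sub>R p" using collinear_lemma by blast
  then have "c *\<^sub>R p + (-1) *\<^sub>R q = 0" by simp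
  then show False using arc_ends_comb_eq_0_iff [OF assms, of c "-1"] by simp
qed

lemma sgn_segment_point:
  assumes "arc_ends p q" "0 \<le> t" "t \<le> 1"
  obtains N where "N > 0" "sgn ((1 - t) *\<^sub>R p + t *\<^sub>R q) = ((1 - t) / N) *\<^sub>R p + (t / N) *\<^sub>R q"
    "norm (sgn ((1 - t) *\<^sub>R p + t *\<^sub>R q)) = 1"
proof
  have "(1 - t) *\<^sub>R p + t *\<^sub>R q \<noteq> 0"
    using assms arc_ends_comb_eq_0_iff [OF assms(1)] by auto
  then show "norm ((1 - t) *\<^sub>R p + t *\<^sub>R q) > 0" "norm (sgn ((1 - t) *\<^sub>R p + t *\<^sub>R q)) = 1"
    by (simp_all add: norm_sgn)
qed (simp add: sgn_div_norm scaleR_add_right divide_inverse_commute)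

lemma geo_arcE:
  assumes "arc_ends p q" "x \<in> geo_arc p q"
  obtains a b where "a \<ge> 0" "b \<ge> 0" "x = a *\<^sub>R p + b *\<^sub>R q" "norm x = 1"
proof -
  obtain t where t: "0 \<le> t" "t \<le> 1" and x: "x = sgn ((1 - t) *\<^sub>R p + t *\<^sub>R q)"
    using assms(2) by (auto simp: geo_arc_def in_segment sgn_div_norm)
  obtain N where "N > 0" "x = ((1 - t) / N) *\<^sub>R p + (t / N) *\<^sub>R q" "norm x = 1"
    unfolding x using sgn_segment_point [OF assms(1) t] .
  then show thesis using t by (intro that) simp_all
qed

lemma geo_arc_intE:
  assumes "arc_ends p q" "x \<in> geo_arc_int p q"
  obtains a b where "a > 0" "b > 0" "x = a *\<^sub>R p + b *\<^sub>R q" "norm x = 1"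
proof -
  obtain t where t: "0 < t" "t < 1" and x: "x = sgn ((1 - t) *\<^sub>R p + t *\<^sub>R q)"
    using assms(2) by (auto simp: geo_arc_int_def in_segment sgn_div_norm)
  obtain N where "N > 0" "x = ((1 - t) / N) *\<^sub>R p + (t / N) *\<^sub>R q" "norm x = 1"
    unfolding x using sgn_segment_point [OF assms(1)] t by (metis less_imp_le)
  then show thesis using t by (intro that) simp_all
qed

lemma sgn_comb_in_geo_arc_int:
  assumes "arc_ends p q" "a > 0" "b > 0"
  shows "sgn (a *\<^sub>R p + b *\<^sub>R q) \<in> geo_arc_int p q"
proof -
  define t where "t = b / (a + b)"
  have "(a + b) * (1 - t) = a" "(a + b) * t = b"
    using assms by (simp_all add: t_def field_simps)
  then have "a *\<^sub>R p + b *\<^sub>R q = (a + b) *\<^sub>R ((1 - t) *\<^sub>R p + t *\<^sub>R q)"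
    by (simp add: scaleR_add_right)
  then have "sgn (a *\<^sub>R p + b *\<^sub>R q) = sgn ((1 - t) *\<^sub>R p + t *\<^sub>R q)"
    using assms by (simp add: sgn_scaleR)
  moreover have "0 < t" "t < 1" using assms by (simp_all add: t_def)
  then have "(1 - t) *\<^sub>R p + t *\<^sub>R q \<in> open_segment p q"
    using assms by (auto simp: in_segment arc_ends_def)
  ultimately show ?thesis by (auto simp: geo_arc_int_def sgn_div_norm)
qed

lemma geo_arc_int_subset: "geo_arc_int p q \<subseteq> geo_arc p q"
  unfolding geo_arc_int_def geo_arc_def using segment_open_subset_closed by blast

lemma geo_arc_eq_int_ends:
  assumes "arc_ends p q"
  shows "geo_arc p q = insert p (insert q (geo_arc_int p q))"
proof -
  have sgn: "(\<lambda>v. v /\<^sub>R norm v) = sgn" by (simp add: fun_eq_iff sgn_div_norm)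
  have "sgn p = p" "sgn q = q" using assms by (auto simp: arc_ends_def sgn_div_norm)
  then show ?thesis
    unfolding geo_arc_def geo_arc_int_def sgn closed_segment_eq_open by auto
qed

lemma end_notin_geo_arc_int:
  assumes pq: "arc_ends p q" and pq': "arc_ends p' q'" and eq: "geo_arc p q = geo_arc p' q'"
  shows "p \<notin> geo_arc_int p' q'"
proof
  assume "p \<in> geo_arc_int p' q'"
  then obtain a b where ab: "a > 0" "b > 0" "p = a *\<^sub>R p' + b *\<^sub>R q'"
    by (rule geo_arc_intE [OF pq'])
  have "p' \<in> geo_arc p q" "q' \<in> geo_arc p q"
    unfolding eq geo_arc_eq_int_ends [OF pq'] by simp_all
  then obtain l1 m1 l2 m2 where
    p': "l1 \<ge> 0" "m1 \<ge> 0" "p' = l1 *\<^sub>R p + m1 *\<^sub>R q" and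
    q': "l2 \<ge> 0" "m2 \<ge> 0" "q' = l2 *\<^sub>R p + m2 *\<^sub>R q"
    using geo_arcE [OF pq] by metis
  have "1 *\<^sub>R p + 0 *\<^sub>R q = (a * l1 + b * l2) *\<^sub>R p + (a * m1 + b * m2) *\<^sub>R q"
    using ab(3) p'(3) q'(3) by (simp add: algebra_simps)
  then have "a * m1 + b * m2 = 0" by (simp only: arc_ends_comb_eq_iff [OF pq])
  then have "m1 = 0" "m2 = 0" using ab p' q' by (simp_all add: add_nonneg_eq_0_iff)
  then have "p' = l1 *\<^sub>R p" "q' = l2 *\<^sub>R p" using p' q' by simp_all
  moreover from this have "l1 = 1" "l2 = 1" using p'(1) q'(1) pq pq' by (simp_all add: arc_ends_def)
  ultimately show False using pq' by (simp add: arc_ends_def)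
qed

lemma endpoint_of_geo_arc_iff:
  assumes pq: "arc_ends p q"
  shows "endpoint_of x (geo_arc p q) \<longleftrightarrow> x = p \<or> x = q"
proof
  assume "endpoint_of x (geo_arc p q)"
  then obtain p' q' where pq': "arc_ends p' q'" "geo_arc p q = geo_arc p' q'" "x = p' \<or> x = q'"
    unfolding endpoint_of_def by blast
  then obtain y where xy: "arc_ends x y" "geo_arc p q = geo_arc x y"
    using arc_ends_commute geo_arc_commute by blast
  have "x \<in> geo_arc p q" unfolding xy(2) geo_arc_eq_int_ends [OF xy(1)] by simp
  moreover have "x \<notin> geo_arc_int p q" using end_notin_geo_arc_int [OF xy(1) pq] xy(2) by simp
  ultimately show "x = p \<or> x = q" unfolding geo_arc_eq_int_ends [OF pq] by blast
next
  assume "x = p \<or> x = q"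
  then show "endpoint_of x (geo_arc p q)" unfolding endpoint_of_def using pq by blast
qed

lemma relint_arc_geo_arc:
  assumes pq: "arc_ends p q"
  shows "relint_arc (geo_arc p q) = geo_arc_int p q"
proof -
  have "geo_arc_int p' q' = geo_arc_int p q"
    if pq': "arc_ends p' q'" "geo_arc p q = geo_arc p' q'" for p' q'
  proof -
    have "endpoint_of p' (geo_arc p q)" "endpoint_of q' (geo_arc p q)"
      unfolding endpoint_of_def using pq' by blast+
    then have "p' = p \<or> p' = q" "q' = p \<or> q' = q" by (simp_all only: endpoint_of_geo_arc_iff [OF pq])
    moreover have "p' \<noteq> q'" using pq'(1) by (simp add: arc_ends_def)
    ultimately show ?thesis using geo_arc_int_commute by metis
  qed
  then show ?thesis unfolding relint_arc_def using pq by blast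
qed

lemma coplanar_comb_arc_ends:
  assumes m: "m \<noteq> 0" and pq: "arc_ends p q" and o: "p \<bullet> m = 0" "q \<bullet> m = 0" "x \<bullet> m = 0"
  obtains a b where "x = a *\<^sub>R p + b *\<^sub>R q"
proof -
  define V where "V = {x. m \<bullet> x = 0}"
  have "p \<notin> span {q}"
  proof
    assume "p \<in> span {q}"
    then obtain k where "p = k *\<^sub>R q" by (auto simp: span_singleton)
    then have "1 *\<^sub>R p + (- k) *\<^sub>R q = 0" by simp
    then show False using arc_ends_comb_eq_0_iff [OF pq, of 1 "- k"] by simp
  qed
  moreover have pq0: "p \<noteq> q" "q \<noteq> 0" using pq by (auto simp: arc_ends_def)
  ultimately have "independent {p, q}" by (simp add: independent_insertI)
  moreover have "dim V = 2" unfolding V_def using dim_hyperplane [OF m] by simp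
  moreover have "{p, q} \<subseteq> V" using o by (simp add: V_def inner_commute)
  ultimately have "V \<subseteq> span {p, q}"
    using card_ge_dim_independent [of "{p, q}" V] pq0 by simp
  then have "x \<in> span {p, q}" using o by (simp add: V_def inner_commute subset_iff)
  then obtain a where "x - a *\<^sub>R p \<in> span {q}" by (auto simp: span_insert)
  then obtain b where "x - a *\<^sub>R p = b *\<^sub>R q" by (auto simp: span_singleton)
  then show thesis using that [of a b] by (simp add: algebra_simps)
qed

lemma coplanar_geo_arc_int_overlap:
  assumes m: "m \<noteq> 0" and pq: "arc_ends p q" and pq': "arc_ends p' q'"
    and o: "p \<bullet> m = 0" "q \<bullet> m = 0" "p' \<bullet> m = 0" "q' \<bullet> m = 0"
    and p: "p \<in> geo_arc_int p' q'"
  shows "geo_arc_int p q \<inter> geo_arc_int p' q' \<noteq> {}"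
proof -
  obtain a b where ab: "a > 0" "b > 0" "p = a *\<^sub>R p' + b *\<^sub>R q'"
    by (rule geo_arc_intE [OF pq' p])
  obtain c d where cd: "q = c *\<^sub>R p' + d *\<^sub>R q'"
    by (rule coplanar_comb_arc_ends [OF m pq' o(3,4) o(2)])
  txt \<open>Points of the arc from \<open>p\<close> towards \<open>q\<close> close to \<open>p\<close> keep positive coordinates
    with respect to \<open>p'\<close>, \<open>q'\<close>.\<close>
  have "((\<lambda>t. (1 - t) * a + t * c) \<longlongrightarrow> a) (at_right 0)"
    "((\<lambda>t. (1 - t) * b + t * d) \<longlongrightarrow> b) (at_right 0)"
    by (auto intro!: tendsto_eq_intros)
  then have "\<forall>\<^sub>F t in at_right 0. 0 < (1 - t) * a + t * c"
    "\<forall>\<^sub>F t in at_right 0. 0 < (1 - t) * b + t * d"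
    using ab(1,2) by (simp_all add: order_tendstoD(1))
  moreover have "\<forall>\<^sub>F t in at_right 0. t \<in> {0<..<1::real}" by (rule eventually_at_right_real) simp
  ultimately have "\<forall>\<^sub>F t in at_right 0. 0 < (1 - t) * a + t * c \<and> 0 < (1 - t) * b + t * d \<and>
      t \<in> {0<..<1}"
    by (intro eventually_conj)
  from eventually_happens' [OF trivial_limit_at_right_real this] obtain t where
    coeffs: "0 < (1 - t) * a + t * c" "0 < (1 - t) * b + t * d" and t: "0 < t" "t < 1"
    by auto
  have "(1 - t) *\<^sub>R p + t *\<^sub>R q = ((1 - t) * a + t * c) *\<^sub>R p' + ((1 - t) * b + t * d) *\<^sub>R q'"
    using ab(3) cd by (simp add: algebra_simps)
  then have "sgn ((1 - t) *\<^sub>R p + t *\<^sub>R q) \<in> geo_arc_int p' q'"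
    using sgn_comb_in_geo_arc_int [OF pq' coeffs] by simp
  moreover have "sgn ((1 - t) *\<^sub>R p + t *\<^sub>R q) \<in> geo_arc_int p q"
    using sgn_comb_in_geo_arc_int [OF pq] t by simp
  ultimately show ?thesis by blast
qed

section \<open>Spherical diagrams\<close>

lemma spherical_diagram_arcE:
  assumes "spherical_diagram D" "a \<in> D"
  obtains p q where "arc_ends p q" "a = geo_arc p q"
proof -
  have "is_arc a" using assms by (simp add: spherical_diagram_def)
  then show thesis using that unfolding is_arc_def by blast
qed

lemma spherical_diagram_blocked:
  assumes sd: "spherical_diagram D" and pq: "arc_ends p q" "geo_arc p q \<in> D" and x: "x = p \<or> x = q"
  obtains p' q' where "arc_ends p' q'" "geo_arc p' q' \<in> D" "x \<in> geo_arc_int p' q'"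
proof -
  have "\<forall>b\<in>D. \<forall>x. endpoint_of x b \<longrightarrow> (\<exists>a\<in>D. x \<in> relint_arc a)"
    using sd by (simp add: spherical_diagram_def)
  moreover have "endpoint_of x (geo_arc p q)" using endpoint_of_geo_arc_iff [OF pq(1)] x by simp
  ultimately obtain a where a: "a \<in> D" "x \<in> relint_arc a" using pq(2) by blast
  obtain p' q' where pq': "arc_ends p' q'" "a = geo_arc p' q'"
    using spherical_diagram_arcE [OF sd a(1)] .
  show thesis
  proof (rule that [OF pq'(1)])
    show "geo_arc p' q' \<in> D" using a(1) pq'(2) by simp
    show "x \<in> geo_arc_int p' q'" using a(2) pq' relint_arc_geo_arc by simp
  qed
qed

lemma spherical_diagram_int_disjoint:
  assumes sd: "spherical_diagram D"
    and pq: "arc_ends p q" "geo_arc p q \<in> D" and pq': "arc_ends p' q'" "geo_arc p' q' \<in> D"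
    and ne: "geo_arc p q \<noteq> geo_arc p' q'"
  shows "geo_arc_int p q \<inter> geo_arc_int p' q' = {}"
proof -
  have "\<forall>a\<in>D. \<forall>b\<in>D. a \<noteq> b \<longrightarrow> relint_arc a \<inter> relint_arc b = {}"
    using sd by (simp add: spherical_diagram_def)
  then have "relint_arc (geo_arc p q) \<inter> relint_arc (geo_arc p' q') = {}"
    using pq(2) pq'(2) ne by blast
  then show ?thesis by (simp only: relint_arc_geo_arc [OF pq(1)] relint_arc_geo_arc [OF pq'(1)])
qed

lemma spherical_diagram_no_coplanar_block:
  assumes sd: "spherical_diagram D" and m: "m \<noteq> 0"
    and pq: "arc_ends p q" "geo_arc p q \<in> D" and pq': "arc_ends p' q'" "geo_arc p' q' \<in> D"
    and o: "p \<bullet> m = 0" "q \<bullet> m = 0" "p' \<bullet> m = 0" "q' \<bullet> m = 0"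
  shows "p \<notin> geo_arc_int p' q'"
proof
  assume p: "p \<in> geo_arc_int p' q'"
  then have "geo_arc p q \<noteq> geo_arc p' q'" using end_notin_geo_arc_int [OF pq(1) pq'(1)] by blast
  then have "geo_arc_int p q \<inter> geo_arc_int p' q' = {}"
    by (rule spherical_diagram_int_disjoint [OF sd pq pq'])
  then show False using coplanar_geo_arc_int_overlap [OF m pq(1) pq'(1) o p] by simp
qed

lemma finite_endpoints:
  assumes sd: "spherical_diagram D"
  shows "finite {x. \<exists>b\<in>D. endpoint_of x b}"
proof -
  have "finite {x. endpoint_of x b}" if b: "b \<in> D" for b
  proof -
    obtain p q where pq: "arc_ends p q" "b = geo_arc p q" by (rule spherical_diagram_arcE [OF sd b])
    then have "{x. endpoint_of x b} = {p, q}" by (auto simp: endpoint_of_geo_arc_iff)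
    then show ?thesis by simp
  qed
  moreover have "{x. \<exists>b\<in>D. endpoint_of x b} = (\<Union>b\<in>D. {x. endpoint_of x b})" by blast
  ultimately show ?thesis using sd by (simp add: spherical_diagram_def)
qed

lemma spherical_diagram_end_off_circle:
  assumes sd: "spherical_diagram D" and n: "n \<noteq> 0"
  shows "\<exists>b\<in>D. \<exists>x. endpoint_of x b \<and> x \<bullet> n \<noteq> 0"
proof (rule ccontr)
  assume "\<not> ?thesis"
  then have on_circle: "x \<bullet> n = 0" if "b \<in> D" "endpoint_of x b" for b x
    using that by blast
  obtain b where b: "b \<in> D" using sd by (auto simp: spherical_diagram_def)
  obtain p q where pq: "arc_ends p q" "geo_arc p q \<in> D"
    using spherical_diagram_arcE [OF sd b] b by metis
  obtain p' q' where pq': "arc_ends p' q'" "geo_arc p' q' \<in> D" and p: "p \<in> geo_arc_int p' q'"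
    using spherical_diagram_blocked [OF sd pq] by blast
  have "p \<bullet> n = 0" "q \<bullet> n = 0" "p' \<bullet> n = 0" "q' \<bullet> n = 0"
    using on_circle pq(2) pq'(2) by (simp_all add: endpoint_of_geo_arc_iff pq(1) pq'(1))
  then show False using spherical_diagram_no_coplanar_block [OF sd n pq pq'] p by simp
qed

section \<open>Great circles\<close>

lemma notin_span_singleton_orthogonal:
  fixes n N :: pt
  assumes "N \<notin> span {n}"
  obtains d where "d \<bullet> n = 0" "d \<bullet> N > 0"
proof
  define d where "d = N - ((N \<bullet> n) / (n \<bullet> n)) *\<^sub>R n"
  show dn: "d \<bullet> n = 0" by (cases "n = 0") (simp_all add: d_def inner_diff_left)
  have "d \<noteq> 0"
  proof
    assume "d = 0"
    then have "N = ((N \<bullet> n) / (n \<bullet> n)) *\<^sub>R n" by (simp add: d_def)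
    then show False using assms by (metis span_base span_mul singletonI)
  qed
  moreover have "d \<bullet> N = d \<bullet> d" using dn by (simp add: d_def inner_diff_right)
  ultimately show "d \<bullet> N > 0" by simp
qed

lemma great_circle_near_both_sides:
  assumes x: "x \<in> great_circle n" "x \<bullet> N = 0" and N: "N \<notin> span {n}" and e: "e > 0"
  shows "\<exists>y\<in>great_circle n. dist y x < e \<and> y \<bullet> N > 0"
    and "\<exists>y\<in>great_circle n. dist y x < e \<and> y \<bullet> N < 0"
proof -
  obtain d where dn: "d \<bullet> n = 0" and dN: "d \<bullet> N > 0" by (rule notin_span_singleton_orthogonal [OF N])
  define y where "y t = sgn (x + t *\<^sub>R d)" for t
  have y: "y t \<in> great_circle n \<and> y t \<bullet> N = t * (d \<bullet> N) / norm (x + t *\<^sub>R d) \<and> x + t *\<^sub>R d \<noteq> 0"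
    if "t \<noteq> 0" for t
  proof -
    have "(x + t *\<^sub>R d) \<bullet> N = t * (d \<bullet> N)" using x(2) by (simp add: inner_add_left)
    then have "x + t *\<^sub>R d \<noteq> 0" using that dN by auto
    moreover have "(x + t *\<^sub>R d) \<bullet> n = 0" using x(1) dn by (simp add: great_circle_def inner_add_left)
    ultimately show ?thesis using \<open>(x + t *\<^sub>R d) \<bullet> N = t * (d \<bullet> N)\<close>
      by (simp add: y_def great_circle_def sgn_div_norm divide_inverse_commute)
  qed
  have "x \<noteq> 0" using x(1) by (auto simp: great_circle_def)
  then have "(y \<longlongrightarrow> sgn (x + 0 *\<^sub>R d)) (at 0)" unfolding y_def by (intro tendsto_intros) simp
  moreover have "sgn x = x" using x(1) by (simp add: great_circle_def sgn_div_norm)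
  ultimately have "\<forall>\<^sub>F t in at 0. dist (y t) x < e" using e by (simp add: tendstoD)
  then obtain \<delta> where \<delta>: "\<delta> > 0" "\<And>t. t \<noteq> 0 \<Longrightarrow> \<bar>t\<bar> < \<delta> \<Longrightarrow> dist (y t) x < e"
    by (auto simp: eventually_at dist_real_def)
  have "y (\<delta> / 2) \<bullet> N > 0" using y [of "\<delta> / 2"] \<delta>(1) dN by simp
  then show "\<exists>y\<in>great_circle n. dist y x < e \<and> y \<bullet> N > 0"
    using y [of "\<delta> / 2"] \<delta> by (intro bexI [of _ "y (\<delta> / 2)"]) auto
  have "y (- \<delta> / 2) \<bullet> N < 0" using y [of "- \<delta> / 2"] \<delta>(1) dN by (simp add: divide_neg_pos)
  then show "\<exists>y\<in>great_circle n. dist y x < e \<and> y \<bullet> N < 0"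
    using y [of "- \<delta> / 2"] \<delta> by (intro bexI [of _ "y (- \<delta> / 2)"]) auto
qed

lemma great_circle_two_points_in_half:
  assumes n: "n \<noteq> 0" and xy: "x \<in> great_circle n" "y \<in> great_circle n"
  obtains u where "u \<noteq> 0" "u \<bullet> n = 0" "x \<bullet> u \<le> 0" "y \<bullet> u \<le> 0"
proof (cases "y = - x")
  case True
  have "(norm (cross3 n x))\<^sup>2 = (norm n)\<^sup>2" using xy(1) by (simp add: norm_cross great_circle_def inner_commute)
  then have "cross3 n x \<noteq> 0" using n by auto
  moreover have "cross3 n x \<bullet> n = 0" "x \<bullet> cross3 n x = 0"
    by (simp_all add: dot_cross_self inner_commute)
  moreover from this have "y \<bullet> cross3 n x = 0" using True by simp
  ultimately show thesis using that [of "cross3 n x"] by linarith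
next
  case False
  have "\<bar>x \<bullet> y\<bar> \<le> 1" using Cauchy_Schwarz_ineq2 [of x y] xy by (simp add: great_circle_def)
  moreover have "x \<bullet> x = 1" "y \<bullet> y = 1"
    using xy by (simp_all add: great_circle_def flip: power2_norm_eq_inner)
  moreover have "x \<bullet> - (x + y) = - (x \<bullet> x) - x \<bullet> y" "y \<bullet> - (x + y) = - (x \<bullet> y) - y \<bullet> y"
    by (simp_all add: inner_diff_right inner_commute [of y x])
  ultimately have "x \<bullet> - (x + y) \<le> 0" "y \<bullet> - (x + y) \<le> 0" unfolding abs_le_iff by linarith+
  moreover have "- (x + y) \<noteq> 0" using False by (simp add: add_eq_0_iff)
  moreover have "- (x + y) \<bullet> n = 0" using xy by (simp add: great_circle_def inner_diff_left)
  ultimately show thesis by (intro that) simp_all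
qed

lemma great_circle_card_le_2_in_half:
  assumes n: "n \<noteq> 0" and X: "finite X" "card X \<le> 2" "X \<subseteq> great_circle n"
  obtains u where "u \<noteq> 0" "u \<bullet> n = 0" "\<forall>x\<in>X. x \<bullet> u \<le> 0"
proof -
  have "card X = 0 \<or> card X = 1 \<or> card X = 2" using X(2) by linarith
  then consider "X = {}" | x where "X = {x}" | x y where "X = {x, y}"
    using X(1) by (auto simp: card_1_singleton_iff card_2_iff)
  then show thesis
  proof cases
    case 1
    obtain u :: pt where "u \<noteq> 0" "orthogonal n u" using orthogonal_to_vector_exists [of n] by auto
    then show thesis using 1 that by (simp add: orthogonal_def inner_commute)
  next
    case (2 x)
    then have "x \<in> great_circle n" using X(3) by simp
    then show thesis using great_circle_two_points_in_half [OF n, of x x] that 2 by auto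
  next
    case (3 x y)
    then have "x \<in> great_circle n" "y \<in> great_circle n" using X(3) by simp_all
    then show thesis using great_circle_two_points_in_half [OF n, of x y] that 3 by auto
  qed
qed

section \<open>Transversal arcs\<close>

definition transversal :: "pt \<Rightarrow> pt set \<Rightarrow> bool" where
  "transversal n a \<longleftrightarrow> (\<exists>p q. arc_ends p q \<and> a = geo_arc p q \<and> p \<bullet> n > 0 \<and> q \<bullet> n < 0)"

lemma transversal_uminus [simp]: "transversal (- n) a \<longleftrightarrow> transversal n a"
proof -
  have "transversal (- n) a" if tr: "transversal n a" for n
  proof -
    obtain p q where "arc_ends p q" "a = geo_arc p q" "p \<bullet> n > 0" "q \<bullet> n < 0"
      using tr unfolding transversal_def by blast
    then have "arc_ends q p" "a = geo_arc q p" "q \<bullet> - n > 0" "p \<bullet> - n < 0"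
      by (simp_all add: arc_ends_commute geo_arc_commute)
    then show ?thesis unfolding transversal_def by blast
  qed
  from this [of n] this [of "- n"] show ?thesis by auto
qed

lemma geo_arc_meets_great_circle_once:
  assumes pq: "arc_ends p q" and n: "p \<bullet> n > 0" "q \<bullet> n < 0"
    and y: "y \<in> geo_arc p q" "y \<bullet> n = 0" and z: "z \<in> geo_arc p q" "z \<bullet> n = 0"
  shows "y = z"
proof -
  define r where "r = (- (q \<bullet> n)) *\<^sub>R p + (p \<bullet> n) *\<^sub>R q"
  have on_ray: "\<exists>k\<ge>0. x = k *\<^sub>R r \<and> norm x = 1" if x: "x \<in> geo_arc p q" "x \<bullet> n = 0" for x
  proof -
    obtain a b where ab: "a \<ge> 0" "x = a *\<^sub>R p + b *\<^sub>R q" "norm x = 1"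
      by (rule geo_arcE [OF pq x(1)])
    then have "a * (p \<bullet> n) + b * (q \<bullet> n) = 0" using x(2) by (simp add: inner_add_left)
    then have "b = (a / (- (q \<bullet> n))) * (p \<bullet> n)" using n by (simp add: field_simps)
    then have "x = (a / (- (q \<bullet> n))) *\<^sub>R r"
      using ab(2) n unfolding r_def by (simp add: scaleR_add_right scaleR_diff_right)
    moreover have "a / (- (q \<bullet> n)) \<ge> 0" using ab(1) n by (intro divide_nonneg_pos) simp_all
    ultimately show ?thesis using ab(3) by blast
  qed
  obtain k l where "k \<ge> 0" "y = k *\<^sub>R r" "norm y = 1" "l \<ge> 0" "z = l *\<^sub>R r" "norm z = 1"
    using on_ray y z by metis
  then have "k * norm r = 1" "l * norm r = 1" by simp_all
  then have "k = l" by (metis mult_cancel_right mult_zero_left zero_neq_one)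
  then show ?thesis using \<open>y = k *\<^sub>R r\<close> \<open>z = l *\<^sub>R r\<close> by simp
qed

lemma transversal_crosses:
  assumes pq: "arc_ends p q" and n: "p \<bullet> n > 0" "q \<bullet> n < 0"
  shows "crosses (geo_arc p q) (great_circle n)"
proof -
  define x where "x = sgn ((- (q \<bullet> n)) *\<^sub>R p + (p \<bullet> n) *\<^sub>R q)"
  have x_int: "x \<in> geo_arc_int p q"
    unfolding x_def using n by (intro sgn_comb_in_geo_arc_int [OF pq]) simp_all
  then have x_arc: "x \<in> geo_arc p q" using geo_arc_int_subset by blast
  have "x \<bullet> n = 0" by (simp add: x_def sgn_div_norm inner_diff_left)
  moreover have "norm x = 1" using geo_arc_intE [OF pq x_int] by blast
  ultimately have x_circle: "x \<in> great_circle n" by (simp add: great_circle_def)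
  have isolated: "geo_arc p q \<inter> great_circle n \<inter> ball x 1 = {x}"
  proof
    show "geo_arc p q \<inter> great_circle n \<inter> ball x 1 \<subseteq> {x}"
      using geo_arc_meets_great_circle_once [OF pq n _ _ x_arc \<open>x \<bullet> n = 0\<close>]
      by (auto simp: great_circle_def)
  qed (use x_arc x_circle in simp)
  have "cross3 p q \<notin> span {n}"
  proof
    assume "cross3 p q \<in> span {n}"
    then obtain k where k: "cross3 p q = k *\<^sub>R n" by (auto simp: span_singleton)
    then have "k * (p \<bullet> n) = 0" using dot_cross_self(1) [of p q] by simp
    then show False using k n arc_ends_cross3_nonzero [OF pq] by simp
  qed
  moreover have "x \<bullet> cross3 p q = 0"
    by (simp add: x_def sgn_div_norm inner_diff_left dot_cross_self)
  note sides = great_circle_near_both_sides [OF x_circle this calculation]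
  show ?thesis
    unfolding crosses_def
  proof (rule exI [of _ p], rule exI [of _ q], rule exI [of _ x], intro conjI)
    show "\<exists>e>0. geo_arc p q \<inter> great_circle n \<inter> ball x e = {x}"
      using isolated by (intro exI [of _ 1]) simp
    show "\<forall>e>0. (\<exists>y\<in>great_circle n. dist y x < e \<and> y \<bullet> cross3 p q > 0) \<and>
        (\<exists>y\<in>great_circle n. dist y x < e \<and> y \<bullet> cross3 p q < 0)"
      using sides by blast
  qed (use pq x_int x_circle in simp_all)
qed

definition crossing_point :: "pt \<Rightarrow> pt set \<Rightarrow> pt" where
  "crossing_point n a = (THE x. x \<in> a \<and> x \<bullet> n = 0)"

lemma crossing_point:
  assumes "transversal n a"
  shows "crossing_point n a \<in> a \<inter> great_circle n"
    and "x \<in> a \<Longrightarrow> x \<bullet> n = 0 \<Longrightarrow> x = crossing_point n a"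
proof -
  obtain p q where pq: "arc_ends p q" "a = geo_arc p q" and n: "p \<bullet> n > 0" "q \<bullet> n < 0"
    using assms unfolding transversal_def by blast
  obtain p' q' z where "geo_arc p q = geo_arc p' q'" "z \<in> geo_arc_int p' q'" "z \<in> great_circle n"
    using transversal_crosses [OF pq(1) n] unfolding crosses_def by blast
  then have z: "z \<in> a" "z \<in> great_circle n" using geo_arc_int_subset pq(2) by auto
  have "z \<bullet> n = 0" using z(2) by (simp add: great_circle_def)
  then have unique: "y = z" if "y \<in> a" "y \<bullet> n = 0" for y
    using geo_arc_meets_great_circle_once [OF pq(1) n, of y z] that z(1) pq(2) by simp
  have "crossing_point n a = z"
    unfolding crossing_point_def using \<open>z \<in> a\<close> \<open>z \<bullet> n = 0\<close> unique by (intro the_equality) blast+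
  then show "crossing_point n a \<in> a \<inter> great_circle n" using z by simp
  show "x \<in> a \<Longrightarrow> x \<bullet> n = 0 \<Longrightarrow> x = crossing_point n a"
    using unique \<open>crossing_point n a = z\<close> by simp
qed

section \<open>Transversal arcs in every direction\<close>

definition transversal_towards :: "pt set set \<Rightarrow> pt \<Rightarrow> pt \<Rightarrow> bool" where
  "transversal_towards D n u \<longleftrightarrow> (\<exists>a\<in>D. transversal n a \<and> (\<exists>x\<in>a. x \<bullet> n = 0 \<and> x \<bullet> u > 0))"

lemma transversal_towards_uminus [simp]:
  "transversal_towards D (- n) u \<longleftrightarrow> transversal_towards D n u"
  by (simp add: transversal_towards_def)

lemma transversal_towards_or_on_circle:
  assumes pq: "arc_ends p q" "geo_arc p q \<in> D"
    and z: "z \<in> geo_arc_int p q" "z \<bullet> n = 0" "z \<bullet> u > 0"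
  shows "transversal_towards D n u \<or> (p \<bullet> n = 0 \<and> q \<bullet> n = 0)"
proof -
  obtain a b where ab: "a > 0" "b > 0" "z = a *\<^sub>R p + b *\<^sub>R q" by (rule geo_arc_intE [OF pq(1) z(1)])
  then have "a * (p \<bullet> n) + b * (q \<bullet> n) = 0" using z(2) by (simp add: inner_add_left)
  then consider "p \<bullet> n > 0" "q \<bullet> n < 0" | "q \<bullet> n > 0" "p \<bullet> n < 0" | "p \<bullet> n = 0" "q \<bullet> n = 0"
    using pos_comb_eq_0_cases [OF ab(1,2)] by blast
  then show ?thesis
  proof cases
    case 1
    then have "transversal n (geo_arc p q)" using pq(1) unfolding transversal_def by blast
    then show ?thesis using pq(2) z geo_arc_int_subset unfolding transversal_towards_def by blast
  next
    case 2
    then have "transversal n (geo_arc p q)"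
      using pq(1) arc_ends_commute geo_arc_commute unfolding transversal_def by metis
    then show ?thesis using pq(2) z geo_arc_int_subset unfolding transversal_towards_def by blast
  qed simp
qed

lemma transversal_towards_of_arc_on_circle:
  assumes sd: "spherical_diagram D" and n: "n \<noteq> 0"
    and pq: "arc_ends p q" "geo_arc p q \<in> D" and on_circle: "p \<bullet> n = 0" "q \<bullet> n = 0"
    and pu: "p \<bullet> u > 0"
  shows "transversal_towards D n u"
proof (rule ccontr)
  assume not_towards: "\<not> transversal_towards D n u"
  obtain p' q' where pq': "arc_ends p' q'" "geo_arc p' q' \<in> D" and p: "p \<in> geo_arc_int p' q'"
    using spherical_diagram_blocked [OF sd pq] by blast
  have "p' \<bullet> n = 0" "q' \<bullet> n = 0"
    using transversal_towards_or_on_circle [OF pq' p on_circle(1) pu] not_towards by simp_all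
  then show False using spherical_diagram_no_coplanar_block [OF sd n pq pq'] on_circle p by simp
qed

lemma transversal_towards_of_end_on_circle:
  assumes sd: "spherical_diagram D" and n: "n \<noteq> 0"
    and pq: "arc_ends p q" "geo_arc p q \<in> D" and q: "q \<bullet> n = 0" "q \<bullet> u > 0"
  shows "transversal_towards D n u"
proof (rule ccontr)
  assume not_towards: "\<not> transversal_towards D n u"
  obtain p' q' where pq': "arc_ends p' q'" "geo_arc p' q' \<in> D" and q_int: "q \<in> geo_arc_int p' q'"
    using spherical_diagram_blocked [OF sd pq] by blast
  have on_circle: "p' \<bullet> n = 0" "q' \<bullet> n = 0"
    using transversal_towards_or_on_circle [OF pq' q_int q] not_towards by simp_all
  obtain a b where ab: "a > 0" "b > 0" "q = a *\<^sub>R p' + b *\<^sub>R q'" by (rule geo_arc_intE [OF pq'(1) q_int])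
  then have "a * (p' \<bullet> u) + b * (q' \<bullet> u) > 0" using q(2) by (simp add: inner_add_left)
  then consider "p' \<bullet> u > 0" | "q' \<bullet> u > 0" using pos_comb_pos [OF ab(1,2)] by blast
  then show False
  proof cases
    case 1
    then show False
      using transversal_towards_of_arc_on_circle [OF sd n pq' on_circle] not_towards by simp
  next
    case 2
    have "arc_ends q' p'" "geo_arc q' p' \<in> D"
      using pq' by (simp_all add: arc_ends_commute geo_arc_commute)
    then show False
      using transversal_towards_of_arc_on_circle [OF sd n _ _ on_circle(2,1) 2] not_towards by simp
  qed
qed

definition positive_ends_below :: "pt set set \<Rightarrow> pt \<Rightarrow> pt \<Rightarrow> bool" where
  "positive_ends_below D n m \<longleftrightarrow> (\<forall>b\<in>D. \<forall>x. endpoint_of x b \<and> x \<bullet> n > 0 \<longrightarrow> x \<bullet> m \<le> 0)"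

lemma transversal_towards_of_tilted_crossing:
  assumes sd: "spherical_diagram D" and n: "n \<noteq> 0"
    and pq: "arc_ends p q" "geo_arc p q \<in> D"
    and below: "positive_ends_below D n m" and m: "m = u - g *\<^sub>R n"
    and x: "x \<in> geo_arc_int p q" "x \<bullet> n > 0" "x \<bullet> m = 0" and qm: "q \<bullet> m > 0"
  shows "transversal_towards D n u"
proof -
  obtain a b where ab: "a > 0" "b > 0" "x = a *\<^sub>R p + b *\<^sub>R q" by (rule geo_arc_intE [OF pq(1) x(1)])
  have xn: "a * (p \<bullet> n) + b * (q \<bullet> n) > 0" and xm: "a * (p \<bullet> m) + b * (q \<bullet> m) = 0"
    using x(2,3) ab(3) by (simp_all add: inner_add_left)
  have "endpoint_of q (geo_arc p q)" by (simp add: endpoint_of_geo_arc_iff [OF pq(1)])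
  then have qn: "q \<bullet> n \<le> 0" using below pq(2) qm unfolding positive_ends_below_def by force
  then have pn: "p \<bullet> n > 0" using pos_comb_pos [OF ab(1,2) xn] by linarith
  txt \<open>The arc meets the plane of \<open>C\<close> at \<open>c\<close>, on the same side of the tilted circle as
    \<open>q\<close>; there \<open>c \<bullet> u = c \<bullet> m\<close>.\<close>
  define c where "c = (- (q \<bullet> n)) *\<^sub>R p + (p \<bullet> n) *\<^sub>R q"
  have cn: "c \<bullet> n = 0" by (simp add: c_def inner_diff_left)
  have "a * (c \<bullet> m) = - (q \<bullet> n) * (a * (p \<bullet> m)) + a * (p \<bullet> n) * (q \<bullet> m)"
    by (simp add: c_def inner_add_left algebra_simps)
  also have "\<dots> = (q \<bullet> m) * (a * (p \<bullet> n) + b * (q \<bullet> n))"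
    using xm by (simp add: algebra_simps eq_neg_iff_add_eq_0 [symmetric])
  finally have "a * (c \<bullet> m) > 0" using xn qm by simp
  then have "c \<bullet> m > 0" using ab(1) by (simp add: zero_less_mult_iff)
  moreover have "c \<bullet> u = c \<bullet> m" using cn by (simp add: m inner_diff_right)
  ultimately have cu: "c \<bullet> u > 0" by simp
  show ?thesis
  proof (cases "q \<bullet> n = 0")
    case True
    then have "q \<bullet> u > 0" using cu pn by (simp add: c_def zero_less_mult_iff)
    then show ?thesis using transversal_towards_of_end_on_circle [OF sd n pq True] by simp
  next
    case False
    have "c \<noteq> 0" using cu by auto
    then have "sgn c \<bullet> n = 0" "sgn c \<bullet> u > 0"
      using cn cu by (simp_all add: sgn_div_norm)
    moreover have "transversal n (geo_arc p q)"
      using pq(1) pn qn False unfolding transversal_def by force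
    moreover have "sgn c \<in> geo_arc_int p q"
      unfolding c_def using pn qn False by (intro sgn_comb_in_geo_arc_int [OF pq(1)]) simp_all
    ultimately show ?thesis using pq(2) geo_arc_int_subset unfolding transversal_towards_def by blast
  qed
qed

lemma transversal_towards_or_on_tilted_circle:
  assumes sd: "spherical_diagram D" and n: "n \<noteq> 0"
    and pq: "arc_ends p q" "geo_arc p q \<in> D"
    and below: "positive_ends_below D n m" and m: "m = u - g *\<^sub>R n"
    and x: "x \<in> geo_arc_int p q" "x \<bullet> n > 0" "x \<bullet> m = 0"
  shows "transversal_towards D n u \<or> (p \<bullet> m = 0 \<and> q \<bullet> m = 0)"
proof -
  obtain a b where ab: "a > 0" "b > 0" "x = a *\<^sub>R p + b *\<^sub>R q" by (rule geo_arc_intE [OF pq(1) x(1)])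
  then have "a * (p \<bullet> m) + b * (q \<bullet> m) = 0" using x(3) by (simp add: inner_add_left)
  then consider "q \<bullet> m > 0" | "p \<bullet> m > 0" | "p \<bullet> m = 0" "q \<bullet> m = 0"
    using pos_comb_eq_0_cases [OF ab(1,2)] by blast
  then show ?thesis
  proof cases
    case 1
    then show ?thesis using transversal_towards_of_tilted_crossing [OF sd n pq below m x] by simp
  next
    case 2
    have "arc_ends q p" "geo_arc q p \<in> D" "x \<in> geo_arc_int q p"
      using pq x(1) by (simp_all add: arc_ends_commute geo_arc_commute geo_arc_int_commute)
    then show ?thesis using transversal_towards_of_tilted_crossing [OF sd n _ _ below m _ x(2,3) 2] by simp
  qed simp
qed

lemma transversal_towards_of_tilted_end:
  assumes sd: "spherical_diagram D" and n: "n \<noteq> 0"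
    and below: "positive_ends_below D n m" and m: "m = u - g *\<^sub>R n" "m \<noteq> 0"
    and v: "b \<in> D" "endpoint_of v b" "v \<bullet> n > 0" "v \<bullet> m = 0"
  shows "transversal_towards D n u"
proof (rule ccontr)
  assume not_towards: "\<not> transversal_towards D n u"
  have on_tilted: "p \<bullet> m = 0 \<and> q \<bullet> m = 0"
    if "arc_ends p q" "geo_arc p q \<in> D" "y \<in> geo_arc_int p q" "y \<bullet> n > 0" "y \<bullet> m = 0" for p q y
    using transversal_towards_or_on_tilted_circle [OF sd n that(1,2) below m(1) that(3-5)] not_towards
    by simp
  obtain p0 q0 where pq0: "arc_ends p0 q0" "b = geo_arc p0 q0" by (rule spherical_diagram_arcE [OF sd v(1)])
  then obtain p q where pq: "arc_ends p q" "geo_arc p q \<in> D" and v_int: "v \<in> geo_arc_int p q"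
    using spherical_diagram_blocked [OF sd] v(1,2) endpoint_of_geo_arc_iff by metis
  have pqm: "p \<bullet> m = 0" "q \<bullet> m = 0" using on_tilted [OF pq v_int v(3,4)] by simp_all
  obtain \<alpha> \<beta> where \<alpha>\<beta>: "\<alpha> > 0" "\<beta> > 0" "v = \<alpha> *\<^sub>R p + \<beta> *\<^sub>R q"
    by (rule geo_arc_intE [OF pq(1) v_int])
  then have "\<alpha> * (p \<bullet> n) + \<beta> * (q \<bullet> n) > 0" using v(3) by (simp add: inner_add_left)
  then have "p \<bullet> n > 0 \<or> q \<bullet> n > 0" by (rule pos_comb_pos [OF \<alpha>\<beta>(1,2)])
  then obtain e f where ef: "arc_ends e f" "geo_arc e f \<in> D" "e \<bullet> n > 0" "e \<bullet> m = 0" "f \<bullet> m = 0"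
    using pq pqm arc_ends_commute geo_arc_commute by metis
  obtain p' q' where pq': "arc_ends p' q'" "geo_arc p' q' \<in> D" and e_int: "e \<in> geo_arc_int p' q'"
    using spherical_diagram_blocked [OF sd ef(1,2)] by blast
  have "p' \<bullet> m = 0" "q' \<bullet> m = 0" using on_tilted [OF pq' e_int ef(3,4)] by simp_all
  then show False using spherical_diagram_no_coplanar_block [OF sd m(2) ef(1,2) pq'] ef(4,5) e_int by simp
qed

lemma transversal_towards_of_positive_end:
  assumes sd: "spherical_diagram D" and n: "n \<noteq> 0" and u: "u \<bullet> n = 0" "u \<noteq> 0"
    and v: "b \<in> D" "endpoint_of v b" "v \<bullet> n > 0"
  shows "transversal_towards D n u"
proof -
  define E where "E = {x. (\<exists>b\<in>D. endpoint_of x b) \<and> x \<bullet> n > 0}"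
  define slope where "slope x = (x \<bullet> u) / (x \<bullet> n)" for x
  define M where "M = Max (slope ` E)"
  have "finite E" using finite_endpoints [OF sd] by (simp add: E_def)
  moreover have "v \<in> E" using v by (auto simp: E_def)
  ultimately obtain w where w: "w \<in> E" "slope w = M" and slope_le: "\<And>x. x \<in> E \<Longrightarrow> slope x \<le> M"
    unfolding M_def by (metis (mono_tags, lifting) Max_in Max_ge empty_iff finite_imageI image_iff)
  define m where "m = u - M *\<^sub>R n"
  have "m \<noteq> 0"
  proof
    assume "m = 0"
    then have "u = M *\<^sub>R n" by (simp add: m_def)
    then show False using u n by auto
  qed
  have "x \<bullet> m \<le> 0" if "x \<in> E" for x
    using slope_le [OF that] that by (simp add: E_def slope_def m_def inner_diff_right pos_divide_le_eq)
  then have "positive_ends_below D n m" unfolding positive_ends_below_def E_def by blast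
  moreover have "w \<bullet> m = 0"
    using w by (simp add: E_def slope_def m_def inner_diff_right divide_eq_eq)
  moreover obtain b' where "b' \<in> D" "endpoint_of w b'" "w \<bullet> n > 0" using w(1) by (auto simp: E_def)
  ultimately show ?thesis
    using transversal_towards_of_tilted_end [OF sd n _ m_def \<open>m \<noteq> 0\<close>] by blast
qed

lemma transversal_towards_every_direction:
  assumes sd: "spherical_diagram D" and n: "n \<noteq> 0" and u: "u \<bullet> n = 0" "u \<noteq> 0"
  shows "transversal_towards D n u"
proof -
  obtain b x where x: "b \<in> D" "endpoint_of x b" "x \<bullet> n \<noteq> 0"
    using spherical_diagram_end_off_circle [OF sd n] by blast
  show ?thesis
  proof (cases "x \<bullet> n > 0")
    case True
    then show ?thesis using transversal_towards_of_positive_end [OF sd n u x(1,2)] by simp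
  next
    case False
    have "transversal_towards D (- n) u"
      by (rule transversal_towards_of_positive_end [OF sd _ _ u(2) x(1,2)]) (use n u x(3) False in simp_all)
    then show ?thesis by simp
  qed
qed

theorem mainTheorem17:
  assumes "spherical_diagram D"
    and "n \<noteq> 0"
  shows "card {a \<in> D. crosses a (great_circle n)} \<ge> 3"
proof (rule ccontr)
  assume few: "\<not> card {a \<in> D. crosses a (great_circle n)} \<ge> 3"
  define T where "T = {a \<in> D. transversal n a}"
  have "finite D" using assms(1) by (simp add: spherical_diagram_def)
  moreover have "T \<subseteq> {a \<in> D. crosses a (great_circle n)}"
    using transversal_crosses by (auto simp: T_def transversal_def)
  ultimately have "finite T" "card T \<le> 2" using few card_mono [of "{a \<in> D. crosses a (great_circle n)}" T]
    by (auto simp: T_def)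
  then have "finite (crossing_point n ` T)" "card (crossing_point n ` T) \<le> 2"
    using card_image_le [of T "crossing_point n"] by simp_all
  moreover have "crossing_point n ` T \<subseteq> great_circle n" using crossing_point(1) by (auto simp: T_def)
  ultimately obtain u where u: "u \<noteq> 0" "u \<bullet> n = 0" "\<forall>a\<in>T. crossing_point n a \<bullet> u \<le> 0"
    using great_circle_card_le_2_in_half [OF assms(2)] by (metis image_eqI)
  obtain a x where "a \<in> T" "x \<in> a" "x \<bullet> n = 0" "x \<bullet> u > 0"
    using transversal_towards_every_direction [OF assms u(2,1)] by (auto simp: transversal_towards_def T_def)
  then show False using crossing_point(2) u(3) by (force simp: T_def)
qed

end
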